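(* There is an absolute constant $C>0$ such that the following holds. Let the mesh be uniform with width $h>0$, i.e. $x_{i+1/2}=x_{1/2}+ih$, and let $(\bar v_i)_{i\in\mathbb{Z}}$ be a bounded real sequence with $\sum_{i}|\bar v_{i+1}-\bar v_i|<\infty$. Let $v^\pm_{i+1/2}$ be the cell interface values of the second order ($k=2$) ENO reconstruction of $(\bar v_i)$. Then $$\sum_{i\in\mathbb{Z}}|\bar v_{i+1}-\bar v_i|^{3}\le C\,\Bigl(\sup_{i}|\bar v_i|\Bigr)\sum_{i\in\mathbb{Z}}(\bar v_{i+1}-\bar v_i)\bigl(v^+_{i+1/2}-v^-_{i+1/2}\bigr).$$ In particular $C$ is independent of $(\bar v_i)$ and of $h$.
   Context: Mesh: cells $I_i=[x_{i-1/2},x_{i+1/2})$. Given a real sequence $(\bar v_i)_{i\in\mathbb{Z}}$, the divided differences are $[\bar v_i]=\bar v_i$ and, for $i<j$, $[\bar v_i,\dots,\bar v_j]=\frac{[\bar v_{i+1},\dots,\bar v_j]-[\bar v_i,\dots,\bar v_{j-1}]}{x_{j+1/2}-x_{i-1/2}}$. The $k$th order ENO reconstruction: for each $i$, set $s_i^1=i$, and for $\ell=1,\dots,k-1$ set $s_i^{\ell+1}=s_i^\ell-1$ if $\bigl|[\bar v_{s_i^\ell-1},\dots,\bar v_{s_i^\ell+\ell-1}]\bigr|<\bigl|[\bar v_{s_i^\ell},\dots,\bar v_{s_i^\ell+\ell}]\bigr|$, and $s_i^{\ell+1}=s_i^\ell$ otherwise; put $s_i=s_i^k$. Then $p_i$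 is the unique polynomial of degree at most $k-1$ with $\frac{1}{|I_j|}\int_{I_j}p_i(x)\,dx=\bar v_j$ for $j=s_i,\dots,s_i+k-1$. Cell interface values: $v^-_{i+1/2}=p_i(x_{i+1/2})$, $v^+_{i+1/2}=p_{i+1}(x_{i+1/2})$. (For $k=2$: $s_i=i-1$ if $|\bar v_i-\bar v_{i-1}|<|\bar v_{i+1}-\bar v_i|$ and $s_i=i$ otherwise.) *)

theory Defs
  imports "HOL-Analysis.Analysis" "HOL-Computational_Algebra.Polynomial"
begin

text \<open>Uniform mesh: interfaces x_{i+1/2} = x0 + i*h, cells I_i = [x0+(i-1)h, x0+ih).
  Cell averages are given by v :: int => real.\<close>

definition iface :: "real \<Rightarrow> real \<Rightarrow> int \<Rightarrow> real" where
  "iface x0 h i = x0 + real_of_int i * h"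

definition cell_avg :: "real \<Rightarrow> real \<Rightarrow> real poly \<Rightarrow> int \<Rightarrow> real" where
  "cell_avg x0 h p j =
     integral {iface x0 h (j - 1) .. iface x0 h j} (poly p) / (iface x0 h j - iface x0 h (j - 1))"

definition eno2_stencil :: "(int \<Rightarrow> real) \<Rightarrow> int \<Rightarrow> int" where
  "eno2_stencil v i = (if \<bar>v i - v (i - 1)\<bar> < \<bar>v (i + 1) - v i\<bar> then i - 1 else i)"

definition eno2_poly :: "real \<Rightarrow> real \<Rightarrow> (int \<Rightarrow> real) \<Rightarrow> int \<Rightarrow> real poly" where
  "eno2_poly x0 h v i =
     (THE p. degree p \<le> 1 \<and>
        (\<forall>j \<in> {eno2_stencil v i .. eno2_stencil v i + 1}. cell_avg x0 h p j = v j))"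

definition eno2_minus :: "real \<Rightarrow> real \<Rightarrow> (int \<Rightarrow> real) \<Rightarrow> int \<Rightarrow> real" where
  "eno2_minus x0 h v i = poly (eno2_poly x0 h v i) (iface x0 h i)"

definition eno2_plus :: "real \<Rightarrow> real \<Rightarrow> (int \<Rightarrow> real) \<Rightarrow> int \<Rightarrow> real" where
  "eno2_plus x0 h v i = poly (eno2_poly x0 h v (i + 1)) (iface x0 h i)"

end

theory Submission imports Defs begin

text \<open>Write \<open>d\<^sub>i = v\<^sub>i\<^sub>+\<^sub>1 - v\<^sub>i\<close>. The ENO2 interface values are \<open>v\<^sub>i + \<sigma>\<^sub>i/2\<close> and
  \<open>v\<^sub>i\<^sub>+\<^sub>1 - \<sigma>\<^sub>i\<^sub>+\<^sub>1/2\<close>, where \<open>\<sigma>\<^sub>i\<close> is whichever of \<open>d\<^sub>i\<^sub>-\<^sub>1, d\<^sub>i\<close> is smaller in absolute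
  value. Hence the jump product is \<open>T\<^sub>i = d\<^sub>i (d\<^sub>i - (\<sigma>\<^sub>i + \<sigma>\<^sub>i\<^sub>+\<^sub>1)/2)\<close>, half the sum of
  the two nonnegative terms \<open>d\<^sub>i (d\<^sub>i - \<sigma>\<^sub>i)\<close> and \<open>d\<^sub>i (d\<^sub>i - \<sigma>\<^sub>i\<^sub>+\<^sub>1)\<close>.
  Writing \<open>\<bar>d\<^sub>i\<bar>\<^sup>3 = d\<^sub>i g(d\<^sub>i)\<close> with \<open>g(x) = x\<bar>x\<bar>\<close> and summing by parts leaves boundary terms
  and \<open>\<Sum> v\<^sub>i\<^sub>+\<^sub>1 (g(d\<^sub>i) - g(d\<^sub>i\<^sub>+\<^sub>1))\<close>. The increment of \<open>g\<close> between two consecutive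
  differences is bounded by twice the two nonnegative terms involving \<open>\<sigma>\<^sub>i\<^sub>+\<^sub>1\<close>, so the
  sum is at most \<open>4 sup\<bar>v\<bar> \<Sum> T\<^sub>i\<close>; the boundary terms vanish in the limit because
  \<open>d\<close> is summable.\<close>

lemma integral_poly_linear:
  fixes a b l u :: real
  assumes "l \<le> u"
  shows "integral {l..u} (poly [:a, b:]) = a * (u - l) + b * (u\<^sup>2 - l\<^sup>2) / 2"
proof -
  have "((\<lambda>x. a + x * b) has_integral ((a * u + b * u\<^sup>2 / 2) - (a * l + b * l\<^sup>2 / 2))) {l..u}"
    by (rule fundamental_theorem_of_calculus[OF assms])
       (auto intro!: derivative_eq_intros
             simp: has_real_derivative_iff_has_vector_derivative[symmetric])
  moreover have "poly [:a, b:] = (\<lambda>x. a + x * b)" by (simp add: fun_eq_iff)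
  ultimately show ?thesis by (simp add: integral_unique field_simps power2_eq_square)
qed

lemma cell_avg_linear:
  assumes "h > 0"
  shows "cell_avg x0 h [:a, b:] j = a + b * (x0 + (real_of_int j - 1/2) * h)"
proof -
  have le: "iface x0 h (j - 1) \<le> iface x0 h j" using assms by (simp add: iface_def)
  show ?thesis using assms unfolding cell_avg_def integral_poly_linear[OF le]
    by (simp add: iface_def field_simps power2_eq_square)
qed

lemma degree_le_1_poly_eq: "degree (p :: 'a::zero poly) \<le> 1 \<Longrightarrow> p = [:coeff p 0, coeff p 1:]"
  by (rule poly_eqI) (auto simp: coeff_pCons split: nat.splits intro!: coeff_eq_0)

lemma eno2_poly_eq:
  fixes v :: "int \<Rightarrow> real" and i :: int
  assumes h: "h > 0"
  defines "s \<equiv> eno2_stencil v i"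
  shows "eno2_poly x0 h v i =
    [: v s - (v (s + 1) - v s) / h * (x0 + (real_of_int s - 1/2) * h), (v (s + 1) - v s) / h :]"
    (is "_ = ?P")
proof -
  have fits: "degree ?P \<le> 1 \<and> (\<forall>j \<in> {s..s + 1}. cell_avg x0 h ?P j = v j)"
  proof (intro conjI ballI)
    fix j assume "j \<in> {s..s + 1}"
    then have "j = s \<or> j = s + 1" by auto
    then show "cell_avg x0 h ?P j = v j" using h by (auto simp: cell_avg_linear field_simps)
  qed simp
  have unique: "q = ?P" if q: "degree q \<le> 1 \<and> (\<forall>j \<in> {s..s + 1}. cell_avg x0 h q j = v j)" for q
  proof -
    define a b where "a = coeff q 0" and "b = coeff q 1"
    have q_eq: "q = [:a, b:]" using q degree_le_1_poly_eq unfolding a_def b_def by blast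
    have avg_s: "a + b * (x0 + (real_of_int s - 1/2) * h) = v s"
      using q cell_avg_linear[OF h, of x0 a b s] q_eq by auto
    moreover have "a + b * (x0 + (real_of_int (s + 1) - 1/2) * h) = v (s + 1)"
      using q cell_avg_linear[OF h, of x0 a b "s + 1"] q_eq by auto
    ultimately have b: "b = (v (s + 1) - v s) / h"
      using h by (simp add: field_simps)
    with avg_s have "a = v s - (v (s + 1) - v s) / h * (x0 + (real_of_int s - 1/2) * h)"
      by simp
    with b show ?thesis using q_eq by simp
  qed
  show ?thesis unfolding eno2_poly_def s_def[symmetric] using fits unique by (rule the_equality)
qed

definition fwd_diff :: "(int \<Rightarrow> real) \<Rightarrow> int \<Rightarrow> real" where
  "fwd_diff v i = v (i + 1) - v i"

definition minabs :: "real \<Rightarrow> real \<Rightarrow> real" where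
  "minabs x y = (if \<bar>x\<bar> < \<bar>y\<bar> then x else y)"

text \<open>\<open>h\<close> times the slope of the reconstruction polynomial \<open>p\<^sub>i\<close>.\<close>
definition eno2_slope :: "(int \<Rightarrow> real) \<Rightarrow> int \<Rightarrow> real" where
  "eno2_slope v i = minabs (fwd_diff v (i - 1)) (fwd_diff v i)"

lemma poly_eno2_poly:
  assumes "h > 0"
  shows "poly (eno2_poly x0 h v i) x = v (eno2_stencil v i)
    + (v (eno2_stencil v i + 1) - v (eno2_stencil v i))
      * (x - (x0 + (real_of_int (eno2_stencil v i) - 1/2) * h)) / h"
  using assms by (simp add: eno2_poly_eq field_simps)

lemma eno2_minus_eq: "h > 0 \<Longrightarrow> eno2_minus x0 h v i = v i + eno2_slope v i / 2"
  unfolding eno2_minus_def poly_eno2_poly eno2_slope_def minabs_def fwd_diff_def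
    eno2_stencil_def iface_def
  by (auto simp: field_simps)

lemma eno2_plus_eq: "h > 0 \<Longrightarrow> eno2_plus x0 h v i = v (i + 1) - eno2_slope v (i + 1) / 2"
  unfolding eno2_plus_def poly_eno2_poly eno2_slope_def minabs_def fwd_diff_def
    eno2_stencil_def iface_def
  by (auto simp: field_simps)

definition eno2_dissipation :: "(int \<Rightarrow> real) \<Rightarrow> int \<Rightarrow> real" where
  "eno2_dissipation v i =
     fwd_diff v i * (fwd_diff v i - (eno2_slope v i + eno2_slope v (i + 1)) / 2)"

lemma eno2_jump_product_eq:
  "h > 0 \<Longrightarrow> (v (i + 1) - v i) * (eno2_plus x0 h v i - eno2_minus x0 h v i)
    = eno2_dissipation v i"
  by (simp add: eno2_plus_eq eno2_minus_eq eno2_dissipation_def fwd_diff_def field_simps)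

lemma mul_sub_minabs_nonneg: "0 \<le> x * (x - minabs x y)" "0 \<le> y * (y - minabs x y)"
proof -
  have le_sq: "a * b \<le> b * b" if "\<bar>a\<bar> \<le> \<bar>b\<bar>" for a b :: real
    by (metis abs_ge_self abs_mult abs_mult_self_eq mult_right_mono abs_ge_zero that order_trans)
  show "0 \<le> x * (x - minabs x y)" "0 \<le> y * (y - minabs x y)"
    unfolding minabs_def using le_sq[of x y] le_sq[of y x] by (auto simp: algebra_simps)
qed

lemma abs_minabs_le: "\<bar>minabs x y\<bar> \<le> \<bar>x\<bar>" "\<bar>minabs x y\<bar> \<le> \<bar>y\<bar>"
  unfolding minabs_def by auto

lemma abs_signed_sq_diff_le:
  fixes x y :: real
  assumes "\<bar>x\<bar> \<le> \<bar>y\<bar>"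
  shows "\<bar>y * \<bar>y\<bar> - x * \<bar>x\<bar>\<bar> \<le> 2 * (y * (y - x))"
proof -
  have nonneg_case: "\<bar>y * \<bar>y\<bar> - x * \<bar>x\<bar>\<bar> \<le> 2 * (y * (y - x))" if "\<bar>x\<bar> \<le> y" for x y :: real
  proof (cases "x \<ge> 0")
    case True
    have "x * x \<le> y * y" using that True by (intro mult_mono) auto
    moreover have "0 \<le> (y - x) * (y - x)" by simp
    ultimately show ?thesis using that True by (simp add: algebra_simps)
  next
    case False
    have "0 \<le> (- x) * (x + 2 * y)" using that False by (intro mult_nonneg_nonneg) auto
    then have "x * x + 2 * (x * y) \<le> 0" by (simp add: algebra_simps)
    moreover have "\<bar>y * \<bar>y\<bar> - x * \<bar>x\<bar>\<bar> = y * y + x * x" using that False by simp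
    moreover have "2 * (y * (y - x)) = 2 * (y * y) - 2 * (x * y)" by (simp add: algebra_simps)
    moreover have "0 \<le> y * y" by simp
    ultimately show ?thesis by linarith
  qed
  show ?thesis
  proof (cases "y \<ge> 0")
    case True
    then show ?thesis using nonneg_case assms by simp
  next
    case False
    then have "\<bar>- x\<bar> \<le> - y" using assms by simp
    from nonneg_case[OF this] show ?thesis by (simp add: algebra_simps abs_minus_commute)
  qed
qed

lemma abs_signed_sq_diff_le_minabs:
  "\<bar>y * \<bar>y\<bar> - x * \<bar>x\<bar>\<bar> \<le> 2 * (x * (x - minabs x y) + y * (y - minabs x y))"
proof (cases "\<bar>x\<bar> < \<bar>y\<bar>")
  case True
  then show ?thesis using abs_signed_sq_diff_le[of x y] by (simp add: minabs_def)
next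
  case False
  then show ?thesis using abs_signed_sq_diff_le[of y x] by (simp add: minabs_def abs_minus_commute)
qed

lemma eno2_dissipation_split:
  "2 * eno2_dissipation v i
    = fwd_diff v i * (fwd_diff v i - eno2_slope v i)
    + fwd_diff v i * (fwd_diff v i - eno2_slope v (i + 1))"
  unfolding eno2_dissipation_def by (simp add: field_simps)

lemma fwd_diff_mul_sub_eno2_slope_nonneg:
  shows "0 \<le> fwd_diff v i * (fwd_diff v i - eno2_slope v i)"
    and "0 \<le> fwd_diff v i * (fwd_diff v i - eno2_slope v (i + 1))"
  unfolding eno2_slope_def by (simp_all add: mul_sub_minabs_nonneg)

lemma eno2_dissipation_nonneg: "0 \<le> eno2_dissipation v i"
  using eno2_dissipation_split[of v i] fwd_diff_mul_sub_eno2_slope_nonneg[of v i] by linarith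

lemma eno2_dissipation_le: "eno2_dissipation v i \<le> 2 * (fwd_diff v i)\<^sup>2"
proof -
  let ?d = "fwd_diff v i" and ?s = "(eno2_slope v i + eno2_slope v (i + 1)) / 2"
  have "\<bar>eno2_slope v i\<bar> \<le> \<bar>?d\<bar>" "\<bar>eno2_slope v (i + 1)\<bar> \<le> \<bar>?d\<bar>"
    unfolding eno2_slope_def by (simp_all add: abs_minabs_le)
  then have "\<bar>?s\<bar> \<le> \<bar>?d\<bar>"
    using abs_triangle_ineq[of "eno2_slope v i" "eno2_slope v (i + 1)"] by simp
  then have jump: "\<bar>?d - ?s\<bar> \<le> 2 * \<bar>?d\<bar>"
    using abs_triangle_ineq4[of ?d ?s] by linarith
  have "eno2_dissipation v i \<le> \<bar>?d\<bar> * \<bar>?d - ?s\<bar>"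
    unfolding eno2_dissipation_def using abs_ge_self[of "?d * (?d - ?s)"] by (simp only: abs_mult)
  also have "\<dots> \<le> \<bar>?d\<bar> * (2 * \<bar>?d\<bar>)"
    using jump by (rule mult_left_mono) simp
  finally show ?thesis by (simp add: power2_eq_square abs_mult_self_eq)
qed

lemma signed_sq_fwd_diff_increment_le:
  "\<bar>fwd_diff v (i + 1) * \<bar>fwd_diff v (i + 1)\<bar> - fwd_diff v i * \<bar>fwd_diff v i\<bar>\<bar>
    \<le> 2 * (fwd_diff v i * (fwd_diff v i - eno2_slope v (i + 1))
           + fwd_diff v (i + 1) * (fwd_diff v (i + 1) - eno2_slope v (i + 1)))"
  using abs_signed_sq_diff_le_minabs[of "fwd_diff v (i + 1)" "fwd_diff v i"]
  by (simp add: eno2_slope_def)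

lemma mult_le_of_abs_le: "\<bar>a\<bar> \<le> M \<Longrightarrow> a * y \<le> M * \<bar>y :: real\<bar>"
proof -
  assume "\<bar>a\<bar> \<le> M"
  have "a * y \<le> \<bar>a\<bar> * \<bar>y\<bar>" using abs_ge_self[of "a * y"] by (simp add: abs_mult)
  also have "\<dots> \<le> M * \<bar>y\<bar>" using \<open>\<bar>a\<bar> \<le> M\<close> by (rule mult_right_mono) simp
  finally show ?thesis .
qed

lemma sum_cube_fwd_diff_le:
  assumes v_le: "\<And>i. \<bar>v i\<bar> \<le> M" and "m \<le> n"
  shows "(\<Sum>i=m..n. \<bar>fwd_diff v i\<bar> ^ 3)
    \<le> M * (fwd_diff v m)\<^sup>2 + M * (fwd_diff v n)\<^sup>2 + 4 * M * (\<Sum>i=m..n. eno2_dissipation v i)"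
proof -
  let ?d = "fwd_diff v" and ?D = "eno2_dissipation v"
  define g where "g x = x * \<bar>x\<bar>" for x :: real
  define L where "L i = ?d i * (?d i - eno2_slope v i)" for i
  define R where "R i = ?d i * (?d i - eno2_slope v (i + 1))" for i
  have L_nonneg: "0 \<le> L i" and R_nonneg: "0 \<le> R i" for i
    unfolding L_def R_def by (simp_all add: fwd_diff_mul_sub_eno2_slope_nonneg)
  have D_split: "2 * ?D i = L i + R i" for i
    unfolding L_def R_def by (rule eno2_dissipation_split)
  have M: "0 \<le> M" using v_le[of 0] by linarith
  have cube: "\<bar>?d i\<bar> ^ 3 = v (i + 1) * g (?d i) - v i * g (?d i)" for i
    by (simp add: g_def fwd_diff_def power3_eq_cube abs_mult_self_eq algebra_simps)
  have increment:
    "v (i + 1) * g (?d i) - v (i + 1) * g (?d (i + 1)) \<le> 2 * M * R i + 2 * M * L (i + 1)" for i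
  proof -
    have bound: "\<bar>g (?d i) - g (?d (i + 1))\<bar> \<le> 2 * (R i + L (i + 1))"
      using signed_sq_fwd_diff_increment_le[of v i] by (simp add: g_def L_def R_def abs_minus_commute)
    have "v (i + 1) * (g (?d i) - g (?d (i + 1))) \<le> M * \<bar>g (?d i) - g (?d (i + 1))\<bar>"
      by (rule mult_le_of_abs_le[OF v_le])
    also have "\<dots> \<le> M * (2 * (R i + L (i + 1)))" using bound M by (rule mult_left_mono)
    finally show ?thesis by (simp add: algebra_simps)
  qed
  have D_scaled: "4 * M * ?D i = 2 * M * L i + 2 * M * R i" for i
  proof -
    have "4 * M * ?D i = 2 * M * (2 * ?D i)" by simp
    also have "\<dots> = 2 * M * L i + 2 * M * R i" by (simp add: D_split distrib_left)
    finally show ?thesis .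
  qed
  have telescoped: "(\<Sum>i=m..k. \<bar>?d i\<bar> ^ 3)
      \<le> v (k + 1) * g (?d k) - v m * g (?d m) + 4 * M * (\<Sum>i=m..k. ?D i) - 2 * M * R k"
    if "m \<le> k" for k
    using that
  proof (induction k rule: int_ge_induct)
    case base
    have "0 \<le> 2 * M * L m" using M L_nonneg by simp
    then show ?case using cube[of m] D_scaled[of m] by simp
  next
    case (step k)
    have "{m..k + 1} = insert (k + 1) {m..k}" using step.hyps by auto
    then have "(\<Sum>i=m..k + 1. \<bar>?d i\<bar> ^ 3) = (\<Sum>i=m..k. \<bar>?d i\<bar> ^ 3) + \<bar>?d (k + 1)\<bar> ^ 3"
      and "(\<Sum>i=m..k + 1. ?D i) = (\<Sum>i=m..k. ?D i) + ?D (k + 1)"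
      by simp_all
    then show ?case
      using step.IH increment[of k] cube[of "k + 1"] D_scaled[of "k + 1"]
      by (simp only: distrib_left)
  qed
  have "v (n + 1) * g (?d n) \<le> M * (?d n)\<^sup>2" and "- v m * g (?d m) \<le> M * (?d m)\<^sup>2"
    using mult_le_of_abs_le[OF v_le, of "n + 1" "g (?d n)"]
      mult_le_of_abs_le[where a = "- v m" and y = "g (?d m)"] v_le[of m]
    by (simp_all add: g_def abs_mult power2_eq_square)
  moreover have "0 \<le> M * R n" using M R_nonneg by simp
  ultimately show ?thesis using telescoped[OF \<open>m \<le> n\<close>] by linarith
qed

lemma finite_ge_if_summable_on:
  fixes f :: "'a \<Rightarrow> real"
  assumes summable: "f summable_on UNIV" and nonneg: "\<And>x. 0 \<le> f x" and "0 < \<delta>"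
  shows "finite {x. \<delta> \<le> f x}"
proof (rule ccontr)
  assume "infinite {x. \<delta> \<le> f x}"
  obtain n where n: "infsum f UNIV < of_nat n * \<delta>" using ex_less_of_nat_mult[OF \<open>0 < \<delta>\<close>] by blast
  obtain B where B: "finite B" "card B = n" "B \<subseteq> {x. \<delta> \<le> f x}"
    using infinite_arbitrarily_large[OF \<open>infinite _\<close>] by blast
  have "of_nat (card B) * \<delta> \<le> sum f B" by (rule sum_bounded_below) (use B in auto)
  also have "\<dots> \<le> infsum f UNIV" by (rule finite_sum_le_infsum[OF summable B(1)]) (auto simp: nonneg)
  finally show False using n B(2) by simp
qed

text \<open>A summable \<open>e\<close> lets the windows be chosen with negligible boundary terms.\<close>
lemma infsum_le_infsum_of_window_sums:
  fixes f g e :: "int \<Rightarrow> real"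
  assumes window: "\<And>m n. m \<le> n \<Longrightarrow> (\<Sum>i=m..n. f i) \<le> e m + e n + (\<Sum>i=m..n. g i)"
    and f_nonneg: "\<And>i. 0 \<le> f i" and g_nonneg: "\<And>i. 0 \<le> g i" and e_nonneg: "\<And>i. 0 \<le> e i"
    and g_summable: "g summable_on UNIV" and e_summable: "e summable_on UNIV"
  shows "(\<Sum>\<^sub>\<infinity>i. f i) \<le> (\<Sum>\<^sub>\<infinity>i. g i)"
proof (cases "f summable_on UNIV")
  case False
  then show ?thesis using g_nonneg by (simp add: infsum_not_exists infsum_nonneg)
next
  case True
  show ?thesis
  proof (rule infsum_le_finite_sums[OF True])
    fix F :: "int set" assume "finite F"
    show "sum f F \<le> (\<Sum>\<^sub>\<infinity>i. g i)"
    proof (rule field_le_epsilon)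
      fix \<epsilon> :: real assume "0 < \<epsilon>"
      define K where "K = insert 0 (F \<union> {i. \<epsilon> / 2 \<le> e i})"
      have K: "finite K"
        using \<open>finite F\<close> finite_ge_if_summable_on[OF e_summable e_nonneg, of "\<epsilon> / 2"] \<open>0 < \<epsilon>\<close>
        by (simp add: K_def)
      define m n where "m = Min K - 1" and "n = Max K + 1"
      have inside: "m < i \<and> i < n" if "i \<in> K" for i
        using Min_le[OF K that] Max_ge[OF K that] by (simp add: m_def n_def)
      have "m \<le> n" using inside[of 0] by (simp add: K_def)
      have "m \<notin> K" "n \<notin> K" using inside by blast+
      then have "e m < \<epsilon> / 2" "e n < \<epsilon> / 2" by (simp_all add: K_def not_le)
      moreover have "F \<subseteq> {m..n}" using inside by (fastforce simp: K_def)
      then have "sum f F \<le> (\<Sum>i=m..n. f i)" by (rule sum_mono2[rotated]) (simp_all add: f_nonneg)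
      moreover have "(\<Sum>i=m..n. f i) \<le> e m + e n + (\<Sum>i=m..n. g i)" using \<open>m \<le> n\<close> by (rule window)
      moreover have "(\<Sum>i=m..n. g i) \<le> (\<Sum>\<^sub>\<infinity>i. g i)"
        by (rule finite_sum_le_infsum[OF g_summable]) (simp_all add: g_nonneg)
      ultimately show "sum f F \<le> (\<Sum>\<^sub>\<infinity>i. g i) + \<epsilon>" by linarith
    qed
  qed
qed

lemma fwd_diff_sq_summable:
  assumes v_le: "\<And>i. \<bar>v i\<bar> \<le> M" and summable: "(\<lambda>i. \<bar>fwd_diff v i\<bar>) summable_on UNIV"
  shows "(\<lambda>i. (fwd_diff v i)\<^sup>2) summable_on UNIV"
proof (rule summable_on_comparison_test[OF summable_on_cmult_right[OF summable, of "2 * M"]])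
  fix i
  have "\<bar>fwd_diff v i\<bar> \<le> 2 * M"
    using abs_triangle_ineq4[of "v (i + 1)" "v i"] v_le[of i] v_le[of "i + 1"]
    by (simp add: fwd_diff_def)
  then have "\<bar>fwd_diff v i\<bar> * \<bar>fwd_diff v i\<bar> \<le> 2 * M * \<bar>fwd_diff v i\<bar>"
    by (rule mult_right_mono) simp
  then show "(fwd_diff v i)\<^sup>2 \<le> 2 * M * \<bar>fwd_diff v i\<bar>"
    by (simp only: power2_eq_square abs_mult_self_eq)
qed simp

theorem mainTheorem3:
  shows "\<exists>C::real. C > 0 \<and>
    (\<forall>(x0::real) (h::real) (v::int \<Rightarrow> real).
       h > 0 \<longrightarrow> bdd_above (range (\<lambda>i. \<bar>v i\<bar>)) \<longrightarrow>
       (\<lambda>i. \<bar>v (i + 1) - v i\<bar>) summable_on UNIV \<longrightarrow>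
       (\<Sum>\<^sub>\<infinity>i. \<bar>v (i + 1) - v i\<bar> ^ 3)
         \<le> C * (SUP i. \<bar>v i\<bar>) *
           (\<Sum>\<^sub>\<infinity>i. (v (i + 1) - v i) * (eno2_plus x0 h v i - eno2_minus x0 h v i)))"
proof (intro exI[of _ 4] conjI allI impI)
  fix x0 h :: real and v :: "int \<Rightarrow> real"
  assume h: "h > 0" and bdd: "bdd_above (range (\<lambda>i. \<bar>v i\<bar>))"
    and summable: "(\<lambda>i. \<bar>v (i + 1) - v i\<bar>) summable_on UNIV"
  define M where "M = (SUP i. \<bar>v i\<bar>)"
  have v_le: "\<bar>v i\<bar> \<le> M" for i unfolding M_def using UNIV_I bdd by (rule cSUP_upper)
  have M: "0 \<le> M" using v_le[of 0] by linarith
  have "(\<lambda>i. \<bar>fwd_diff v i\<bar>) summable_on UNIV" using summable by (simp add: fwd_diff_def)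
  with v_le have sq: "(\<lambda>i. (fwd_diff v i)\<^sup>2) summable_on UNIV" by (rule fwd_diff_sq_summable)
  have D: "eno2_dissipation v summable_on UNIV"
    using summable_on_cmult_right[OF sq, of 2] eno2_dissipation_le eno2_dissipation_nonneg
    by (rule summable_on_comparison_test)
  have "(\<Sum>\<^sub>\<infinity>i. \<bar>fwd_diff v i\<bar> ^ 3) \<le> (\<Sum>\<^sub>\<infinity>i. 4 * M * eno2_dissipation v i)"
  proof (rule infsum_le_infsum_of_window_sums[where e = "\<lambda>i. M * (fwd_diff v i)\<^sup>2"])
    show "(\<Sum>i=m..n. \<bar>fwd_diff v i\<bar> ^ 3)
      \<le> M * (fwd_diff v m)\<^sup>2 + M * (fwd_diff v n)\<^sup>2 + (\<Sum>i=m..n. 4 * M * eno2_dissipation v i)"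
      if "m \<le> n" for m n
      using sum_cube_fwd_diff_le[OF v_le that] by (simp add: sum_distrib_left)
  qed (use M D sq eno2_dissipation_nonneg in \<open>auto intro: summable_on_cmult_right\<close>)
  also have "\<dots> = 4 * M * (\<Sum>\<^sub>\<infinity>i. eno2_dissipation v i)" by (rule infsum_cmult_right')
  finally show "(\<Sum>\<^sub>\<infinity>i. \<bar>v (i + 1) - v i\<bar> ^ 3) \<le> 4 * M *
      (\<Sum>\<^sub>\<infinity>i. (v (i + 1) - v i) * (eno2_plus x0 h v i - eno2_minus x0 h v i))"
    by (simp add: fwd_diff_def eno2_jump_product_eq[OF h])
qed simp

end
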